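(* Let $\alpha,\beta>0$, $f$ as in the context, and $\zeta,\xi:\mathbb{R}_+\to\mathbb{R}$ continuous. Let $(\underline{\mathbf{W}},\underline{\mathbf{Q}})$ and $(\overline{\mathbf{W}},\overline{\mathbf{Q}})$, with all components in $\mathscr{C}^1([0,+\infty),\mathbb{R})$, be respectively a subsolution and a supersolution of the asymptotic system for $t>0$ and integers $j\in[\zeta(t),\xi(t)]$, i.e. for such $t,j$: $$\overline{W}_j'\ge-2\alpha\overline{W}_j+\beta(\overline{Q}_j+\overline{Q}_{j+1}),\quad \overline{Q}_j'\ge f(\overline{Q}_j)+\alpha(\overline{W}_j+\overline{W}_{j-1})-2\beta\overline{Q}_j,$$ and the same with all inequalities reversed for $(\underline{\mathbf{W}},\underline{\mathbf{Q}})$. Assume $\underline{W}_j(0)\le\overline{W}_j(0)$ and $\underline{Q}_j(0)\le\overline{Q}_j(0)$ for all integers $\zeta(0)-1\le j\le\xi(0)+1$, and $\underline{W}_j(t)\le\overline{W}_j(t)$, $\underline{Q}_j(t)\le\overline{Q}_j(t)$ for all $t>0$ and integers $j\in[\zeta(t)-1,\zeta(t))\cup(\xi(t),\xi(t)+1]$. Then $\underline{W}_j(t)\le\overline{W}_j(t)$ and $\underline{Q}_j(t)\le\overline{Q}_j(t)$ for all $t>0$ and integers $\zeta(t)\le j\le\xi(t)$.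
   Context: $f\in\mathscr{C}^1([0,1])$ satisfies $f(0)=f(1)=0$ and $0<f(u)\le f'(0)u$ for $u\in(0,1)$, extended to a locally Lipschitz function on $\mathbb{R}$ negative on $\mathbb{R}\setminus[0,1]$. *)

theory Defs
  imports "HOL-Analysis.Analysis"
begin

definition admissible_f :: "(real \<Rightarrow> real) \<Rightarrow> bool" where
  "admissible_f f \<longleftrightarrow>
     (\<exists>f'. (\<forall>x\<in>{0..1}. (f has_real_derivative f' x) (at x within {0..1}))
          \<and> continuous_on {0..1} f'
          \<and> f 0 = 0 \<and> f 1 = 0
          \<and> (\<forall>u\<in>{0<..<1}. 0 < f u \<and> f u \<le> f' 0 * u))
   \<and> (\<forall>x. \<exists>U L. open U \<and> x \<in> U \<and> L-lipschitz_on U f)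
   \<and> (\<forall>u. u \<notin> {0..1} \<longrightarrow> f u < 0)"

end

theory Submission
  imports Defs
begin

(* The differences w_j = Wl_j - Wu_j and q_j = Ql_j - Qu_j satisfy a cooperative linear system of
   differential inequalities: w_j' <= -2 alpha w_j + beta (q_j + q_(j+1)) and
   q_j' <= L |q_j| + alpha (w_j + w_(j-1)) - 2 beta q_j, where L is a Lipschitz constant of f on the
   finitely many values that matter up to a time T.  Compare all active differences with the
   barrier eps exp((K+1) t), K = |L| + 2 alpha + 2 beta.  At the first time one of them reaches
   the barrier, the index lies strictly inside the window (initial and boundary data are
   ordered) and all its neighbours are still below the barrier; since alpha, beta >= 0 its
   derivative is then at most K times the barrier, less than the derivative of the barrier,
   which is impossible for a function reaching the barrier from below.  Letting eps -> 0 gives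
   the claim. *)

definition int_window :: "(real \<Rightarrow> real) \<Rightarrow> (real \<Rightarrow> real) \<Rightarrow> real \<Rightarrow> int set" where
  "int_window lo hi t = {k. lo t \<le> of_int k \<and> of_int k \<le> hi t}"

lemma finite_Union_int_window:
  assumes "compact S" and "continuous_on S lo" and "continuous_on S hi"
  shows "finite (\<Union>t\<in>S. int_window lo hi t)"
proof -
  have "bdd_below (lo ` S)" "bdd_above (hi ` S)"
    using assms by (auto intro!: bounded_imp_bdd_below bounded_imp_bdd_above
        compact_imp_bounded compact_continuous_image)
  then obtain a b where "\<forall>t\<in>S. a \<le> lo t" "\<forall>t\<in>S. hi t \<le> b"
    by (auto simp: bdd_below_def bdd_above_def)
  then have "(\<Union>t\<in>S. int_window lo hi t) \<subseteq> {\<lfloor>a\<rfloor>..\<lceil>b\<rceil>}"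
    by (force simp: int_window_def floor_le_iff le_ceiling_iff)
  then show ?thesis by (rule finite_subset) simp
qed

lemma closed_int_window_times:
  assumes "closed S" and "continuous_on S lo" and "continuous_on S hi"
  shows "closed {t \<in> S. k \<in> int_window lo hi t}"
proof -
  have "{t \<in> S. k \<in> int_window lo hi t} = {t \<in> S. lo t \<le> of_int k} \<inter> {t \<in> S. of_int k \<le> hi t}"
    by (auto simp: int_window_def)
  also have "closed \<dots>"
    using assms by (intro closed_Int continuous_on_closed_Collect_le continuous_on_const)
  finally show ?thesis .
qed

lemma eventually_int_window_widened:
  assumes "(lo \<longlongrightarrow> lo t) F" and "(hi \<longlongrightarrow> hi t) F" and "k \<in> int_window lo hi t"
  shows "eventually (\<lambda>s. k \<in> int_window (\<lambda>s. lo s - 1) (\<lambda>s. hi s + 1) s) F"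
proof -
  have "eventually (\<lambda>s. lo s < lo t + 1) F" "eventually (\<lambda>s. hi t - 1 < hi s) F"
    using assms(1,2) by (auto intro: order_tendstoD)
  then show ?thesis
    by eventually_elim (use assms(3) in \<open>auto simp: int_window_def\<close>)
qed

lemma lipschitz_on_compact_if_locally_lipschitz:
  fixes f :: "'a::metric_space \<Rightarrow> 'b::metric_space"
  assumes "\<forall>x. \<exists>U L. open U \<and> x \<in> U \<and> L-lipschitz_on U f" and "compact S"
  obtains L where "L-lipschitz_on S f"
proof -
  have "local_lipschitz {0::real} S (\<lambda>_. f)"
  proof (rule local_lipschitzI)
    fix x assume "x \<in> S"
    obtain U L where U: "open U" "x \<in> U" "L-lipschitz_on U f" using assms(1) by blast
    then obtain e where "e > 0" "cball x e \<subseteq> U" by (meson open_contains_cball)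
    then show "\<exists>u>0. \<exists>L. \<forall>t\<in>cball t u \<inter> {0}. L-lipschitz_on (cball x u \<inter> S) f" for t
      by (intro exI[of _ e] conjI exI[of _ L]) (auto intro: lipschitz_on_subset[OF U(3)])
  qed
  then obtain L where "\<And>t. t \<in> {0::real} \<Longrightarrow> L-lipschitz_on S f"
    by (rule local_lipschitz_compact_implies_lipschitz) (auto simp: assms(2))
  then show thesis using that by blast
qed

lemma lipschitz_bound_on_window:
  fixes f :: "real \<Rightarrow> real" and lo hi :: "real \<Rightarrow> real" and u v :: "int \<Rightarrow> real \<Rightarrow> real"
  assumes "\<forall>x. \<exists>U L. open U \<and> x \<in> U \<and> L-lipschitz_on U f"
    and "continuous_on {0..T} lo" and "continuous_on {0..T} hi"
    and u: "\<And>k. continuous_on {0..T} (u k)" and v: "\<And>k. continuous_on {0..T} (v k)"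
  obtains L where "\<And>k t. t \<in> {0..T} \<Longrightarrow> lo t \<le> of_int k \<Longrightarrow> of_int k \<le> hi t \<Longrightarrow>
    \<bar>f (u k t) - f (v k t)\<bar> \<le> L * \<bar>u k t - v k t\<bar>"
proof -
  define J where "J = (\<Union>t\<in>{0..T}. int_window lo hi t)"
  define C where "C = (\<Union>k\<in>J. u k ` {0..T} \<union> v k ` {0..T})"
  have "finite J" unfolding J_def using assms(2,3) by (rule finite_Union_int_window[OF compact_Icc])
  then have "compact C"
    unfolding C_def using u v by (intro compact_UN compact_Un compact_continuous_image) auto
  with assms(1) obtain L where L: "L-lipschitz_on C f"
    by (rule lipschitz_on_compact_if_locally_lipschitz)
  have "\<bar>f (u k t) - f (v k t)\<bar> \<le> L * \<bar>u k t - v k t\<bar>"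
    if "t \<in> {0..T}" "lo t \<le> of_int k" "of_int k \<le> hi t" for k t
  proof -
    have "k \<in> J" using that unfolding J_def int_window_def by blast
    then have "u k t \<in> C" "v k t \<in> C" using that(1) unfolding C_def by blast+
    then show ?thesis using lipschitz_onD[OF L] by (simp add: dist_real_def)
  qed
  then show thesis by (rule that)
qed

lemma continuous_on_Icc_tendsto_at_left:
  fixes g :: "real \<Rightarrow> 'a::topological_space"
  assumes "continuous_on {a..b} g" and "t \<in> {a<..b}"
  shows "(g \<longlongrightarrow> g t) (at_left t)"
  using assms by (intro continuous_on_Icc_at_leftD[OF continuous_on_subset[OF assms(1)]]) auto

lemma DERIV_nonneg_at_upcrossing:
  fixes v :: "real \<Rightarrow> real"
  assumes "(v has_real_derivative l) (at t)" and "0 \<le> v t"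
    and "eventually (\<lambda>s. v s < 0) (at_left t)"
  shows "0 \<le> l"
proof (rule tendsto_lowerbound)
  show "((\<lambda>s. (v s - v t) / (s - t)) \<longlongrightarrow> l) (at_left t)"
    using assms(1) by (simp add: has_field_derivative_iff filterlim_at_split)
  have "eventually (\<lambda>s. s < t) (at_left t)" by (simp add: eventually_at_filter)
  with assms(3) show "eventually (\<lambda>s. 0 \<le> (v s - v t) / (s - t)) (at_left t)"
    by eventually_elim (use assms(2) in \<open>auto intro: divide_nonpos_neg\<close>)
qed simp

lemma first_crossing_time:
  fixes d :: "'i \<Rightarrow> real \<Rightarrow> real" and b :: "real \<Rightarrow> real" and A :: "real \<Rightarrow> 'i set"
  assumes "finite J" and "\<And>t. t \<in> {0..T} \<Longrightarrow> A t \<subseteq> J"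
    and "\<And>i. closed {t \<in> {0..T}. i \<in> A t}"
    and "\<And>i. continuous_on {0..T} (d i)" and "continuous_on {0..T} b"
    and "t \<in> {0..T}" and "i \<in> A t" and "b t \<le> d i t"
  obtains ts j where "ts \<in> {0..T}" and "j \<in> A ts" and "b ts \<le> d j ts"
    and "\<forall>s\<in>{0..<ts}. \<forall>k\<in>A s. d k s < b s"
proof -
  define F where "F = {s \<in> {0..T}. \<exists>k \<in> A s. b s \<le> d k s}"
  have "F = (\<Union>k\<in>J. {s \<in> {0..T}. k \<in> A s} \<inter> {s \<in> {0..T}. b s \<le> d k s})"
    using assms(2) unfolding F_def by blast
  also have "closed \<dots>"
    by (intro closed_UN closed_Int ballI continuous_on_closed_Collect_le closed_atLeastAtMost
        assms(1,3-5))
  finally have "closed F" .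
  moreover have "t \<in> F" and "bdd_below F"
    using assms(6-8) unfolding F_def by (auto intro: bdd_belowI[of _ 0])
  ultimately have "Inf F \<in> F" and least: "\<And>s. s \<in> F \<Longrightarrow> Inf F \<le> s"
    using closed_contains_Inf cInf_lower by blast+
  then obtain j where "Inf F \<in> {0..T}" "j \<in> A (Inf F)" "b (Inf F) \<le> d j (Inf F)"
    unfolding F_def by blast
  moreover have "\<forall>s\<in>{0..<Inf F}. \<forall>k\<in>A s. d k s < b s"
    using least \<open>Inf F \<in> {0..T}\<close> unfolding F_def by force
  ultimately show thesis by (rule that)
qed

locale quasimonotone_system =
  fixes T K :: real and J :: "'i set" and A D :: "real \<Rightarrow> 'i set" and d d' :: "'i \<Rightarrow> real \<Rightarrow> real"
  assumes finite_J: "finite J" and active_subset: "\<And>t. t \<in> {0..T} \<Longrightarrow> A t \<subseteq> J"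
    and closed_active: "\<And>i. closed {t \<in> {0..T}. i \<in> A t}"
    and cont: "\<And>i. continuous_on {0..T} (d i)"
    and deriv: "\<And>i t. t \<in> {0<..T} \<Longrightarrow> (d i has_real_derivative d' i t) (at t)"
    and initial: "\<And>i. i \<in> A 0 \<Longrightarrow> d i 0 \<le> 0"
    and boundary: "\<And>i t. t \<in> {0<..T} \<Longrightarrow> i \<in> A t \<Longrightarrow> i \<notin> D t \<Longrightarrow> d i t \<le> 0"
    and left_stable: "\<And>i t. t \<in> {0<..T} \<Longrightarrow> i \<in> D t \<Longrightarrow> eventually (\<lambda>s. i \<in> A s) (at_left t)"
    and quasimonotone: "\<And>i t e. t \<in> {0<..T} \<Longrightarrow> i \<in> D t \<Longrightarrow> 0 < e \<Longrightarrow> d i t = e \<Longrightarrow>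
           (\<forall>k\<in>A t. d k t \<le> e) \<Longrightarrow> d' i t \<le> K * e"
begin

lemma
  assumes b: "continuous_on {0..T} b" and ts: "ts \<in> {0<..T}" and "0 < b ts"
    and before: "\<forall>s\<in>{0..<ts}. \<forall>k\<in>A s. d k s < b s"
  shows eventually_below_before_first_crossing:
      "\<And>k. k \<in> D ts \<Longrightarrow> eventually (\<lambda>s. d k s < b s) (at_left ts)"
    and le_at_first_crossing: "\<And>k. k \<in> A ts \<Longrightarrow> d k ts \<le> b ts"
proof -
  show below: "eventually (\<lambda>s. d k s < b s) (at_left ts)" if "k \<in> D ts" for k
  proof -
    have "eventually (\<lambda>s. s \<in> {0<..<ts}) (at_left ts)"
      using ts by (intro eventually_at_left_real) simp
    with left_stable[OF ts that] show ?thesis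
      by eventually_elim (use before in auto)
  qed
  show "d k ts \<le> b ts" if "k \<in> A ts" for k
  proof (cases "k \<in> D ts")
    case True
    show ?thesis
      using below[OF True]
      by (intro tendsto_le[OF trivial_limit_at_left_real continuous_on_Icc_tendsto_at_left[OF b ts]
          continuous_on_Icc_tendsto_at_left[OF cont ts]])
        (auto elim: eventually_mono)
  next
    case False
    with boundary[OF ts that] \<open>0 < b ts\<close> show ?thesis by simp
  qed
qed

lemma below_barrier:
  assumes "0 < \<epsilon>" and "t \<in> {0..T}" and "i \<in> A t"
  shows "d i t < \<epsilon> * exp ((K + 1) * t)"
proof (rule ccontr)
  define b where "b s = \<epsilon> * exp ((K + 1) * s)" for s
  have b_pos: "0 < b s" for s using \<open>0 < \<epsilon>\<close> by (simp add: b_def)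
  have b_deriv: "(b has_real_derivative (K + 1) * b s) (at s)" for s
    unfolding b_def by (auto intro!: derivative_eq_intros)
  have b_cont: "continuous_on {0..T} b" unfolding b_def by (intro continuous_intros)
  assume "\<not> d i t < \<epsilon> * exp ((K + 1) * t)"
  then have "b t \<le> d i t" by (simp add: b_def)
  then obtain ts j where "ts \<in> {0..T}" "j \<in> A ts" "b ts \<le> d j ts"
    and before: "\<forall>s\<in>{0..<ts}. \<forall>k\<in>A s. d k s < b s"
    using first_crossing_time[of J T A d b t i] finite_J active_subset closed_active cont b_cont assms(2,3)
    by blast
  have "ts \<noteq> 0"
  proof
    assume "ts = 0"
    with initial \<open>j \<in> A ts\<close> have "d j ts \<le> 0" by simp
    with b_pos[of ts] \<open>b ts \<le> d j ts\<close> show False by simp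
  qed
  with \<open>ts \<in> {0..T}\<close> have ts: "ts \<in> {0<..T}" by simp
  note crossing = eventually_below_before_first_crossing[OF b_cont ts b_pos before]
    le_at_first_crossing[OF b_cont ts b_pos before]
  have "j \<in> D ts"
    using boundary[OF ts \<open>j \<in> A ts\<close>] b_pos[of ts] \<open>b ts \<le> d j ts\<close> by force
  have "d j ts = b ts" using crossing(2)[OF \<open>j \<in> A ts\<close>] \<open>b ts \<le> d j ts\<close> by simp
  have "d' j ts \<le> K * b ts"
    using quasimonotone[OF ts \<open>j \<in> D ts\<close> b_pos \<open>d j ts = b ts\<close>] crossing(2) by blast
  moreover have "0 \<le> d' j ts - (K + 1) * b ts"
  proof (rule DERIV_nonneg_at_upcrossing)
    show "((\<lambda>s. d j s - b s) has_real_derivative d' j ts - (K + 1) * b ts) (at ts)"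
      by (intro DERIV_diff deriv[OF ts] b_deriv)
    show "0 \<le> d j ts - b ts" using \<open>d j ts = b ts\<close> by simp
    show "eventually (\<lambda>s. d j s - b s < 0) (at_left ts)"
      using crossing(1)[OF \<open>j \<in> D ts\<close>] by eventually_elim simp
  qed
  ultimately show False using b_pos[of ts] by (simp add: algebra_simps)
qed

theorem nonpos:
  assumes "t \<in> {0..T}" and "i \<in> A t"
  shows "d i t \<le> 0"
proof (rule ccontr)
  assume "\<not> d i t \<le> 0"
  with below_barrier[of "d i t / exp ((K + 1) * t)", OF _ assms] show False by simp
qed

end

lemma Inl_mem_Plus_iff [simp]: "Inl a \<in> A <+> B \<longleftrightarrow> a \<in> A"
  and Inr_mem_Plus_iff [simp]: "Inr b \<in> A <+> B \<longleftrightarrow> b \<in> B"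
  by auto

lemma lattice_rhs_quasimonotone:
  fixes \<alpha> \<beta> L e :: real
  assumes "0 \<le> \<alpha>" and "0 \<le> \<beta>" and "0 < e"
  shows "w = e \<Longrightarrow> q\<^sub>0 \<le> e \<Longrightarrow> q\<^sub>1 \<le> e \<Longrightarrow>
      - 2 * \<alpha> * w + \<beta> * (q\<^sub>0 + q\<^sub>1) \<le> (\<bar>L\<bar> + 2 * \<alpha> + 2 * \<beta>) * e"
    and "q = e \<Longrightarrow> w\<^sub>0 \<le> e \<Longrightarrow> w\<^sub>1 \<le> e \<Longrightarrow>
      L * \<bar>q\<bar> + \<alpha> * (w\<^sub>0 + w\<^sub>1) - 2 * \<beta> * q \<le> (\<bar>L\<bar> + 2 * \<alpha> + 2 * \<beta>) * e"
proof -
  have "0 \<le> \<alpha> * e" "0 \<le> \<beta> * e" "0 \<le> \<bar>L\<bar> * e"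
    using assms by simp_all
  show "- 2 * \<alpha> * w + \<beta> * (q\<^sub>0 + q\<^sub>1) \<le> (\<bar>L\<bar> + 2 * \<alpha> + 2 * \<beta>) * e"
    if "w = e" "q\<^sub>0 \<le> e" "q\<^sub>1 \<le> e"
  proof -
    have "\<beta> * (q\<^sub>0 + q\<^sub>1) \<le> \<beta> * (2 * e)" using that assms(2) by (intro mult_left_mono) auto
    with that \<open>0 \<le> \<alpha> * e\<close> \<open>0 \<le> \<bar>L\<bar> * e\<close> show ?thesis by (simp add: algebra_simps)
  qed
  show "L * \<bar>q\<bar> + \<alpha> * (w\<^sub>0 + w\<^sub>1) - 2 * \<beta> * q \<le> (\<bar>L\<bar> + 2 * \<alpha> + 2 * \<beta>) * e"
    if "q = e" "w\<^sub>0 \<le> e" "w\<^sub>1 \<le> e"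
  proof -
    have "\<alpha> * (w\<^sub>0 + w\<^sub>1) \<le> \<alpha> * (2 * e)" using that assms(1) by (intro mult_left_mono) auto
    moreover have "L * \<bar>q\<bar> \<le> \<bar>L\<bar> * e" using that assms(3) by (simp add: mult_right_mono)
    ultimately show ?thesis using that \<open>0 \<le> \<beta> * e\<close> by (simp add: algebra_simps)
  qed
qed

lemma lattice_difference_nonpos:
  fixes \<alpha> \<beta> L T :: real and lo hi :: "real \<Rightarrow> real" and w q w' q' :: "int \<Rightarrow> real \<Rightarrow> real"
  assumes "0 \<le> \<alpha>" and "0 \<le> \<beta>"
    and lo: "continuous_on {0..T} lo" and hi: "continuous_on {0..T} hi"
    and w: "\<And>k. continuous_on {0..T} (w k)" and q: "\<And>k. continuous_on {0..T} (q k)"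
    and w': "\<And>k t. t \<in> {0<..T} \<Longrightarrow> (w k has_real_derivative w' k t) (at t)"
    and q': "\<And>k t. t \<in> {0<..T} \<Longrightarrow> (q k has_real_derivative q' k t) (at t)"
    and w_ineq: "\<And>k t. t \<in> {0<..T} \<Longrightarrow> lo t \<le> of_int k \<Longrightarrow> of_int k \<le> hi t \<Longrightarrow>
           w' k t \<le> - 2 * \<alpha> * w k t + \<beta> * (q k t + q (k + 1) t)"
    and q_ineq: "\<And>k t. t \<in> {0<..T} \<Longrightarrow> lo t \<le> of_int k \<Longrightarrow> of_int k \<le> hi t \<Longrightarrow>
           q' k t \<le> L * \<bar>q k t\<bar> + \<alpha> * (w k t + w (k - 1) t) - 2 * \<beta> * q k t"
    and initial: "\<And>k. lo 0 - 1 \<le> of_int k \<Longrightarrow> of_int k \<le> hi 0 + 1 \<Longrightarrow> w k 0 \<le> 0 \<and> q k 0 \<le> 0"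
    and boundary: "\<And>k t. t \<in> {0<..T} \<Longrightarrow>
           (lo t - 1 \<le> of_int k \<and> of_int k < lo t) \<or> (hi t < of_int k \<and> of_int k \<le> hi t + 1) \<Longrightarrow>
           w k t \<le> 0 \<and> q k t \<le> 0"
    and "t \<in> {0..T}" and k: "lo t - 1 \<le> of_int k" "of_int k \<le> hi t + 1"
  shows "w k t \<le> 0 \<and> q k t \<le> 0"
proof -
  define A where "A = int_window (\<lambda>s. lo s - 1) (\<lambda>s. hi s + 1)"
  define D where "D = int_window lo hi"
  define J where "J = (\<Union>t\<in>{0..T}. A t)"
  define d where "d = case_sum w q"
  define d' where "d' = case_sum w' q'"
  have "finite J"
    unfolding J_def A_def using lo hi by (intro finite_Union_int_window) (auto intro: continuous_intros)
  have closed_A: "closed {t \<in> {0..T}. k \<in> A t}" for k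
    unfolding A_def using lo hi by (intro closed_int_window_times continuous_intros) auto
  have left_stable: "eventually (\<lambda>s. k \<in> A s) (at_left t)" if "t \<in> {0<..T}" "k \<in> D t" for k t
  proof -
    note continuous_on_Icc_tendsto_at_left[OF lo that(1)] continuous_on_Icc_tendsto_at_left[OF hi that(1)]
    with that(2) show ?thesis unfolding A_def D_def by (intro eventually_int_window_widened)
  qed
  interpret system: quasimonotone_system T "\<bar>L\<bar> + 2 * \<alpha> + 2 * \<beta>" "J <+> J" "\<lambda>t. A t <+> A t"
    "\<lambda>t. D t <+> D t" d d'
  proof
    show "finite (J <+> J)" using \<open>finite J\<close> by simp
    show "A t <+> A t \<subseteq> J <+> J" if "t \<in> {0..T}" for t
      using that by (auto simp: J_def)
    show "closed {t \<in> {0..T}. i \<in> A t <+> A t}" for i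
      using closed_A by (cases i) auto
    show "continuous_on {0..T} (d i)" for i
      using w q by (cases i) (auto simp: d_def)
    show "(d i has_real_derivative d' i t) (at t)" if "t \<in> {0<..T}" for i t
      using w' q' that by (cases i) (auto simp: d_def d'_def)
    show "d i 0 \<le> 0" if "i \<in> A 0 <+> A 0" for i
      using initial that by (cases i) (auto simp: d_def A_def int_window_def)
    show "d i t \<le> 0" if "t \<in> {0<..T}" "i \<in> A t <+> A t" "i \<notin> D t <+> D t" for i t
      using boundary[OF that(1)] that(2,3) by (cases i) (auto simp: d_def A_def D_def int_window_def not_le)
    show "eventually (\<lambda>s. i \<in> A s <+> A s) (at_left t)" if "t \<in> {0<..T}" "i \<in> D t <+> D t" for i t
      using left_stable[OF that(1)] that(2) by (cases i) auto
    show "d' i t \<le> (\<bar>L\<bar> + 2 * \<alpha> + 2 * \<beta>) * e"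
      if t: "t \<in> {0<..T}" and i: "i \<in> D t <+> D t" and "0 < e" and di: "d i t = e"
        and below: "\<forall>k\<in>A t <+> A t. d k t \<le> e"
      for i t e
    proof -
      have le_e: "d k t \<le> e" if "k \<in> A t <+> A t" for k using below that by blast
      show ?thesis
      proof (cases i)
        case (Inl k)
        with i di have k: "lo t \<le> of_int k" "of_int k \<le> hi t" and "w k t = e"
          by (simp_all add: D_def int_window_def d_def)
        have "q k t \<le> e" "q (k + 1) t \<le> e"
          using le_e[of "Inr k"] le_e[of "Inr (k + 1)"] k by (auto simp: A_def int_window_def d_def)
        from lattice_rhs_quasimonotone(1)[OF assms(1,2) \<open>0 < e\<close> \<open>w k t = e\<close> this, of L]
        show ?thesis using w_ineq[OF t k] by (simp add: Inl d'_def)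
      next
        case (Inr k)
        with i di have k: "lo t \<le> of_int k" "of_int k \<le> hi t" and "q k t = e"
          by (simp_all add: D_def int_window_def d_def)
        have "w k t \<le> e" "w (k - 1) t \<le> e"
          using le_e[of "Inl k"] le_e[of "Inl (k - 1)"] k by (auto simp: A_def int_window_def d_def)
        from lattice_rhs_quasimonotone(2)[OF assms(1,2) \<open>0 < e\<close> \<open>q k t = e\<close> this, of L]
        show ?thesis using q_ineq[OF t k] by (simp add: Inr d'_def)
      qed
    qed
  qed
  from system.nonpos[of t "Inl k"] system.nonpos[of t "Inr k"] show ?thesis
    using \<open>t \<in> {0..T}\<close> k by (simp add: d_def A_def int_window_def)
qed

theorem propositionB7:
  fixes \<alpha> \<beta> :: real
    and f :: "real \<Rightarrow> real"
    and \<zeta> \<xi> :: "real \<Rightarrow> real"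
    and Wl Ql Wu Qu Wl' Ql' Wu' Qu' :: "int \<Rightarrow> real \<Rightarrow> real"
  assumes "\<alpha> > 0" and "\<beta> > 0"
    and "admissible_f f"
    and "continuous_on {0..} \<zeta>" and "continuous_on {0..} \<xi>"
    \<comment> \<open>all components are C^1 on [0,+\<infinity>), with derivatives Wl', Ql', Wu', Qu'\<close>
    and "\<And>j t. t \<ge> 0 \<Longrightarrow> (Wl j has_real_derivative Wl' j t) (at t within {0..})"
    and "\<And>j t. t \<ge> 0 \<Longrightarrow> (Ql j has_real_derivative Ql' j t) (at t within {0..})"
    and "\<And>j t. t \<ge> 0 \<Longrightarrow> (Wu j has_real_derivative Wu' j t) (at t within {0..})"
    and "\<And>j t. t \<ge> 0 \<Longrightarrow> (Qu j has_real_derivative Qu' j t) (at t within {0..})"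
    and "\<And>j. continuous_on {0..} (Wl' j)" and "\<And>j. continuous_on {0..} (Ql' j)"
    and "\<And>j. continuous_on {0..} (Wu' j)" and "\<And>j. continuous_on {0..} (Qu' j)"
    \<comment> \<open>supersolution\<close>
    and "\<And>j t. t > 0 \<Longrightarrow> \<zeta> t \<le> real_of_int j \<Longrightarrow> real_of_int j \<le> \<xi> t \<Longrightarrow>
           Wu' j t \<ge> - 2 * \<alpha> * Wu j t + \<beta> * (Qu j t + Qu (j + 1) t)"
    and "\<And>j t. t > 0 \<Longrightarrow> \<zeta> t \<le> real_of_int j \<Longrightarrow> real_of_int j \<le> \<xi> t \<Longrightarrow>
           Qu' j t \<ge> f (Qu j t) + \<alpha> * (Wu j t + Wu (j - 1) t) - 2 * \<beta> * Qu j t"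
    \<comment> \<open>subsolution\<close>
    and "\<And>j t. t > 0 \<Longrightarrow> \<zeta> t \<le> real_of_int j \<Longrightarrow> real_of_int j \<le> \<xi> t \<Longrightarrow>
           Wl' j t \<le> - 2 * \<alpha> * Wl j t + \<beta> * (Ql j t + Ql (j + 1) t)"
    and "\<And>j t. t > 0 \<Longrightarrow> \<zeta> t \<le> real_of_int j \<Longrightarrow> real_of_int j \<le> \<xi> t \<Longrightarrow>
           Ql' j t \<le> f (Ql j t) + \<alpha> * (Wl j t + Wl (j - 1) t) - 2 * \<beta> * Ql j t"
    \<comment> \<open>initial ordering\<close>
    and "\<And>j. \<zeta> 0 - 1 \<le> real_of_int j \<Longrightarrow> real_of_int j \<le> \<xi> 0 + 1 \<Longrightarrow>
           Wl j 0 \<le> Wu j 0 \<and> Ql j 0 \<le> Qu j 0"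
    \<comment> \<open>boundary ordering\<close>
    and "\<And>j t. t > 0 \<Longrightarrow>
           (\<zeta> t - 1 \<le> real_of_int j \<and> real_of_int j < \<zeta> t) \<or>
           (\<xi> t < real_of_int j \<and> real_of_int j \<le> \<xi> t + 1) \<Longrightarrow>
           Wl j t \<le> Wu j t \<and> Ql j t \<le> Qu j t"
  shows "\<forall>t > 0. \<forall>j. \<zeta> t \<le> real_of_int j \<and> real_of_int j \<le> \<xi> t \<longrightarrow>
           Wl j t \<le> Wu j t \<and> Ql j t \<le> Qu j t"
proof (intro allI impI)
  fix T :: real and j :: int
  assume "T > 0" and j: "\<zeta> T \<le> of_int j \<and> of_int j \<le> \<xi> T"
  note sup_W = assms(14) and sup_Q = assms(15) and sub_W = assms(16) and sub_Q = assms(17)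
  have at_interior: "at t within {0..} = at t" if "t \<in> {0<..T}" for t :: real
    using that by (intro at_within_interior) auto
  have cont_of_deriv: "continuous_on {0..T} g"
    if "\<And>t. t \<ge> 0 \<Longrightarrow> (g has_real_derivative g' t) (at t within {0..})" for g g'
    by (rule continuous_on_subset[OF DERIV_continuous_on[OF that]]) auto
  have cont: "continuous_on {0..T} (Wl k)" "continuous_on {0..T} (Ql k)"
    "continuous_on {0..T} (Wu k)" "continuous_on {0..T} (Qu k)" for k
    by (rule cont_of_deriv, rule assms(6-9), assumption)+
  have window: "continuous_on {0..T} \<zeta>" "continuous_on {0..T} \<xi>"
    using assms(4,5) by (auto intro: continuous_on_subset)
  have f_loclip: "\<forall>x. \<exists>U L. open U \<and> x \<in> U \<and> L-lipschitz_on U f"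
    using assms(3) unfolding admissible_f_def by blast
  obtain L where L: "\<And>k t. t \<in> {0..T} \<Longrightarrow> \<zeta> t \<le> of_int k \<Longrightarrow> of_int k \<le> \<xi> t \<Longrightarrow>
      \<bar>f (Ql k t) - f (Qu k t)\<bar> \<le> L * \<bar>Ql k t - Qu k t\<bar>"
    using lipschitz_bound_on_window[where u = Ql and v = Qu, OF f_loclip window cont(2,4)] by blast
  have "Wl j T - Wu j T \<le> 0 \<and> Ql j T - Qu j T \<le> 0"
  proof (rule lattice_difference_nonpos[where lo = \<zeta> and hi = \<xi> and L = L and \<alpha> = \<alpha> and \<beta> = \<beta>
        and w = "\<lambda>k t. Wl k t - Wu k t" and q = "\<lambda>k t. Ql k t - Qu k t"
        and w' = "\<lambda>k t. Wl' k t - Wu' k t" and q' = "\<lambda>k t. Ql' k t - Qu' k t"])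
    show "continuous_on {0..T} (\<lambda>t. Wl k t - Wu k t)" "continuous_on {0..T} (\<lambda>t. Ql k t - Qu k t)" for k
      using cont by (auto intro: continuous_on_diff)
    show "((\<lambda>t. Wl k t - Wu k t) has_real_derivative Wl' k t - Wu' k t) (at t)"
      "((\<lambda>t. Ql k t - Qu k t) has_real_derivative Ql' k t - Qu' k t) (at t)"
      if "t \<in> {0<..T}" for k t
      using assms(6-9)[of t k] at_interior[OF that] that by (auto intro: DERIV_diff)
    show "Wl' k t - Wu' k t \<le> - 2 * \<alpha> * (Wl k t - Wu k t) +
        \<beta> * ((Ql k t - Qu k t) + (Ql (k + 1) t - Qu (k + 1) t))"
      if "t \<in> {0<..T}" "\<zeta> t \<le> of_int k" "of_int k \<le> \<xi> t" for k t
      using sub_W[of t k] sup_W[of t k] that by (simp add: algebra_simps)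
    show "Ql' k t - Qu' k t \<le> L * \<bar>Ql k t - Qu k t\<bar> +
        \<alpha> * ((Wl k t - Wu k t) + (Wl (k - 1) t - Wu (k - 1) t)) - 2 * \<beta> * (Ql k t - Qu k t)"
      if "t \<in> {0<..T}" "\<zeta> t \<le> of_int k" "of_int k \<le> \<xi> t" for k t
    proof -
      have "f (Ql k t) - f (Qu k t) \<le> L * \<bar>Ql k t - Qu k t\<bar>"
        using L[of t k] that by (simp add: abs_le_iff)
      then show ?thesis using sub_Q[of t k] sup_Q[of t k] that by (simp add: algebra_simps)
    qed
  qed (use assms(1,2,18,19) window \<open>T > 0\<close> j in auto)
  then show "Wl j T \<le> Wu j T \<and> Ql j T \<le> Qu j T" by simp
qed

end
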